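(* Let $q$ be a prime power, $m$ a positive integer with $m\ne 2$, $n=q^{2m}-1$, and $\delta$ an integer with $2\le\delta\le n$. The primitive, narrow-sense BCH code $\mathcal{BCH}(n,q^2;\delta)$ over $\mathbf{F}_{q^2}$ contains its Hermitian dual code if and only if $$\delta\le\delta_{\max}=q^{m+[m\text{ even}]}-1-(q^2-2)[m\text{ even}].$$
   Context: For a prime power $Q$ and integer $M\ge1$, let $\alpha$ be a primitive element of $\mathbf{F}_{Q^M}$, $n=Q^M-1$, and $C_x=\{xQ^k\bmod n\mid k\in\mathbf{Z}\}$ the $Q$-ary cyclotomic coset of $x$ modulo $n$. For $2\le\delta\le n$, $\mathcal{BCH}(n,Q;\delta)$ is the cyclic code of length $n$ over $\mathbf{F}_Q$ with generator polynomial $\prod_{z\in Z}(x-\alpha^z)$, $Z=C_1\cup\cdots\cup C_{\delta-1}$. Here $Q=q^2$, $M=m$. The Hermitian dual of $C\subseteq\mathbf{F}_{q^2}^n$ is $C^{\perp_h}=\{y\mid y^q\cdot x=0\ \forall x\in C\}$ with $y^q=(y_1^q,\dots,y_n^q)$. Iverson notation: $[P]=1$ if $P$ holds and $0$ otherwise. *)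

theory Defs
  imports "HOL-Computational_Algebra.Computational_Algebra"
begin

definition prime_power :: "nat \<Rightarrow> bool" where
  "prime_power q \<longleftrightarrow> (\<exists>p k. prime p \<and> k \<ge> 1 \<and> q = p ^ k)"

definition subfield_of_order :: "nat \<Rightarrow> 'b::{field,finite} set" where
  "subfield_of_order Q = {x. x ^ Q = x}"

definition primitive_elem :: "'b::{field,finite} \<Rightarrow> bool" where
  "primitive_elem \<alpha> \<longleftrightarrow> (\<forall>x. x \<noteq> 0 \<longrightarrow> (\<exists>k::nat. x = \<alpha> ^ k))"

definition cyc_coset :: "nat \<Rightarrow> nat \<Rightarrow> nat \<Rightarrow> nat set" where
  "cyc_coset Q n x = {x * Q ^ k mod n | k. True}"

definition bch_defining_set :: "nat \<Rightarrow> nat \<Rightarrow> nat \<Rightarrow> nat set" where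
  "bch_defining_set Q n \<delta> = (\<Union>x\<in>{1..<\<delta>}. cyc_coset Q n x)"

definition bch_gen_poly :: "'b::{field,finite} \<Rightarrow> nat \<Rightarrow> nat \<Rightarrow> nat \<Rightarrow> 'b poly" where
  "bch_gen_poly \<alpha> Q n \<delta> = (\<Prod>z\<in>bch_defining_set Q n \<delta>. [:- (\<alpha> ^ z), 1:])"

definition words :: "nat \<Rightarrow> nat \<Rightarrow> (nat \<Rightarrow> 'b::{field,finite}) set" where
  "words Q n = {c. (\<forall>i. c i \<in> subfield_of_order Q) \<and> (\<forall>i\<ge>n. c i = 0)}"

definition word_poly :: "nat \<Rightarrow> (nat \<Rightarrow> 'b::comm_ring_1) \<Rightarrow> 'b poly" where
  "word_poly n c = (\<Sum>i<n. monom (c i) i)"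

definition cyclic_code :: "nat \<Rightarrow> nat \<Rightarrow> 'b::{field,finite} poly \<Rightarrow> (nat \<Rightarrow> 'b) set" where
  "cyclic_code Q n g = {c \<in> words Q n. g dvd word_poly n c}"

definition BCH :: "'b::{field,finite} \<Rightarrow> nat \<Rightarrow> nat \<Rightarrow> nat \<Rightarrow> (nat \<Rightarrow> 'b) set" where
  "BCH \<alpha> n Q \<delta> = cyclic_code Q n (bch_gen_poly \<alpha> Q n \<delta>)"

definition herm_dual :: "nat \<Rightarrow> nat \<Rightarrow> (nat \<Rightarrow> 'b::{field,finite}) set \<Rightarrow> (nat \<Rightarrow> 'b) set" where
  "herm_dual q n C = {y \<in> words (q^2) n. \<forall>x\<in>C. (\<Sum>i<n. y i ^ q * x i) = 0}"

end

(* Write Q = q^2 and let Z be the defining set of the BCH code. For a cyclic code whose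
   defining set Z is a union of Q-cyclotomic cosets, the Hermitian dual lies in the code iff
   q s + z = 0 (mod n) has no solution with s, z in Z. Both directions use the trace
   codewords i |-> Tr(beta alpha^(t i)), Tr the trace of F_(Q^m) over F_Q: evaluated at
   alpha^z they pick out the k < m with n | t Q^k + z, and paired with a word y over F_Q they
   give Tr(beta y(alpha^t)), which vanishes for all beta only if y(alpha^t) = 0.
   For the BCH defining set the condition says that no x, y in [1, delta) and odd j satisfy
   n | x + q^j y. Reducing j modulo 2m, and swapping x and y if necessary, gives j <= m, and
   then 0 < x + q^j y < n whenever x, y < delta_max; conversely there are x, y <= delta_max
   and odd j with x + q^j y = n, for even m only once m >= 4. *)

theory Submission
  imports Defs "HOL-Number_Theory.Residues"
begin

lemma power_card_UNIV_eq:
  fixes x :: "'b::{field,finite}"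
  shows "x ^ card (UNIV :: 'b set) = x"
proof (cases "x = 0")
  case False
  have "x * (\<Prod>y\<in>UNIV-{0}. x * y) = x * x ^ (card (UNIV :: 'b set) - 1) * \<Prod>(UNIV-{0})"
    by (simp add: prod.distrib mult_ac)
  also have "x * x ^ (card (UNIV :: 'b set) - 1) = x ^ card (UNIV :: 'b set)"
    using finite_UNIV_card_ge_0[where ?'a = 'b] by (simp flip: power_Suc)
  also have "(\<Prod>y\<in>UNIV-{0}. x * y) = (\<Prod>y\<in>UNIV-{0}. y)"
    by (rule prod.reindex_bij_witness[of _ "\<lambda>y. y / x" "\<lambda>y. x * y"]) (use False in auto)
  finally show ?thesis
    by simp
qed (use finite_UNIV_card_ge_0[where ?'a = 'b] in auto)

lemma prod_linear_factors_dvd_iff: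
  fixes f :: "'x \<Rightarrow> 'a::field"
  assumes "finite A" "inj_on f A"
  shows "(\<Prod>a\<in>A. [:- f a, 1:]) dvd p \<longleftrightarrow> (\<forall>a\<in>A. poly p (f a) = 0)"
  using assms
proof (induction A arbitrary: p rule: finite_induct)
  case (insert a A)
  let ?g = "\<Prod>b\<in>A. [:- f b, 1:]"
  have IH: "?g dvd p \<longleftrightarrow> (\<forall>b\<in>A. poly p (f b) = 0)" for p
    using insert.prems by (intro insert.IH) (simp add: inj_on_insert)
  have "poly ?g (f a) \<noteq> 0"
    using insert by (auto simp: poly_prod prod_zero_iff)
  have "[:- f a, 1:] * ?g dvd p \<longleftrightarrow> ?g dvd p \<and> poly p (f a) = 0"
  proof
    assume "?g dvd p \<and> poly p (f a) = 0"
    then obtain r where p: "p = ?g * r" and "poly p (f a) = 0"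
      by blast
    then have "[:- f a, 1:] dvd r"
      using \<open>poly ?g (f a) \<noteq> 0\<close> by (simp add: poly_eq_0_iff_dvd)
    then show "[:- f a, 1:] * ?g dvd p"
      unfolding p by (metis mult.commute mult_dvd_mono dvd_refl)
  qed (meson dvd_mult_left dvd_mult_right poly_eq_0_iff_dvd)
  then show ?case
    using IH insert.hyps by auto
qed simp

lemma poly_word_poly: "poly (word_poly n c) x = (\<Sum>i<n. c i * x ^ i)"
  by (simp add: word_poly_def poly_sum poly_monom)

lemma bch_defining_set_subset: "n > 0 \<Longrightarrow> bch_defining_set Q n \<delta> \<subseteq> {..<n}"
  by (auto simp: bch_defining_set_def cyc_coset_def)

lemma bch_defining_set_mult_closed:
  assumes "z \<in> bch_defining_set Q n \<delta>"
  shows "z * Q mod n \<in> bch_defining_set Q n \<delta>"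
proof -
  obtain x k where "x \<in> {1..<\<delta>}" "z = x * Q ^ k mod n"
    using assms by (auto simp: bch_defining_set_def cyc_coset_def)
  then have "z * Q mod n = x * Q ^ Suc k mod n"
    by (simp add: mod_mult_left_eq mod_mult_right_eq mult_ac)
  then show ?thesis
    using \<open>x \<in> {1..<\<delta>}\<close> unfolding bch_defining_set_def cyc_coset_def by blast
qed

section \<open>The field of order q^(2m)\<close>

locale hermitian_field =
  fixes q m n :: nat and \<alpha> :: "'b::{field,finite}"
  assumes prime_power_q: "prime_power q" and m_pos: "m \<ge> 1"
    and card_field: "card (UNIV :: 'b set) = q ^ (2 * m)"
    and primitive: "primitive_elem \<alpha>"
    and n_eq: "n = q ^ (2 * m) - 1"
begin

lemma prime_CHAR: "prime CHAR('b)"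
  by (intro prime_CHAR_semidom finite_imp_CHAR_pos) simp

lemma q_power_of_CHAR: "\<exists>e. q = CHAR('b) ^ e"
proof -
  obtain p k where p: "prime p" "q = p ^ k"
    using prime_power_q unfolding prime_power_def by blast
  have "CHAR('b) dvd q ^ (2 * m)"
    using CHAR_dvd_CARD[where 'a='b] unfolding card_field .
  then have "CHAR('b) dvd p"
    using p prime_CHAR prime_dvd_power by blast
  then have "CHAR('b) = p"
    using p prime_CHAR primes_dvd_imp_eq by blast
  then show ?thesis
    using p by blast
qed

lemma q_ge_2: "q \<ge> 2"
proof -
  obtain p k where "prime p" "k \<ge> 1" "q = p ^ k"
    using prime_power_q unfolding prime_power_def by blast
  then show ?thesis
    using prime_ge_2_nat[of p] self_le_power[of p k] by simp
qed

lemma card_field_ge_4: "q ^ (2 * m) \<ge> 4"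
proof -
  have "2 ^ 2 \<le> q ^ 2"
    using q_ge_2 by (intro power_mono) auto
  also have "\<dots> \<le> q ^ (2 * m)"
    using q_ge_2 m_pos by (intro power_increasing) auto
  finally show ?thesis
    by simp
qed

lemma n_pos: "n > 0"
  using card_field_ge_4 by (simp add: n_eq)

lemma of_nat_n: "(of_nat n :: 'b) = -1"
proof -
  have "(of_nat (q ^ (2 * m)) :: 'b) = 0"
    using CHAR_dvd_CARD[where 'a='b] unfolding card_field of_nat_eq_0_iff_char_dvd .
  then show ?thesis
    using n_pos by (simp add: n_eq of_nat_diff)
qed

lemma frobenius_sum: "sum f A ^ (q ^ j) = (\<Sum>i\<in>A. (f i :: 'b) ^ (q ^ j))"
proof -
  obtain e where "q = CHAR('b) ^ e"
    using q_power_of_CHAR by blast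
  then show ?thesis
    by (intro freshmans_dream_sum'[of "q ^ j" "e * j"] prime_CHAR) (simp add: power_mult)
qed

lemma frobenius_sum_q: "sum f A ^ q = (\<Sum>i\<in>A. (f i :: 'b) ^ q)"
  using frobenius_sum[of f A 1] by simp

lemma frobenius_power_2m: "(x :: 'b) ^ (q ^ (2 * m)) = x"
  using power_card_UNIV_eq[of x] card_field by simp

lemma subfield_frobenius_power:
  assumes "x ^ (q ^ 2) = (x :: 'b)"
  shows "x ^ (q ^ (2 * k)) = x"
proof (induction k)
  case (Suc k)
  have "q ^ (2 * Suc k) = q ^ (2 * k) * q ^ 2"
    by (simp add: mult_Suc_right power_add power2_eq_square mult.commute)
  then have "x ^ (q ^ (2 * Suc k)) = (x ^ (q ^ (2 * k))) ^ (q ^ 2)"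
    by (simp only: power_mult)
  then show ?case
    using Suc assms by simp
qed simp

lemma alpha_nonzero: "\<alpha> \<noteq> 0"
proof
  assume "\<alpha> = 0"
  have "x \<in> {0, 1}" for x :: 'b
  proof (cases "x = 0")
    case False
    then obtain k where "x = \<alpha> ^ k"
      using primitive unfolding primitive_elem_def by blast
    then show ?thesis
      using \<open>\<alpha> = 0\<close> by (simp add: power_0_left)
  qed simp
  then have "(UNIV :: 'b set) \<subseteq> {0, 1}"
    by blast
  then have "card (UNIV :: 'b set) \<le> card {0, 1 :: 'b}"
    by (intro card_mono) auto
  then have "card (UNIV :: 'b set) \<le> 2"
    by simp
  then show False
    using card_field_ge_4 by (simp add: card_field)
qed

lemma alpha_power_n: "\<alpha> ^ n = 1"
proof -
  have "Suc n = q ^ (2 * m)"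
    using n_pos by (simp add: n_eq)
  then have "\<alpha> ^ n * \<alpha> = 1 * \<alpha>"
    using frobenius_power_2m[of \<alpha>] by (simp flip: power_Suc2)
  then show ?thesis
    using alpha_nonzero by simp
qed

lemma alpha_power_mod: "\<alpha> ^ k = \<alpha> ^ (k mod n)"
proof -
  have "\<alpha> ^ k = (\<alpha> ^ n) ^ (k div n) * \<alpha> ^ (k mod n)"
    by (simp flip: power_mult power_add)
  then show ?thesis
    by (simp add: alpha_power_n)
qed

lemma inj_on_alpha_power: "inj_on (\<lambda>k. \<alpha> ^ k) {..<n}"
proof (rule eq_card_imp_inj_on)
  have "UNIV - {0} \<subseteq> (\<lambda>k. \<alpha> ^ k) ` {..<n}"
  proof
    fix x :: 'b
    assume "x \<in> UNIV - {0}"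
    then obtain k where "x = \<alpha> ^ k"
      using primitive unfolding primitive_elem_def by blast
    then show "x \<in> (\<lambda>k. \<alpha> ^ k) ` {..<n}"
      using n_pos by (intro image_eqI[of _ _ "k mod n"]) (simp_all add: alpha_power_mod[of k])
  qed
  then have "card (UNIV - {0 :: 'b}) \<le> card ((\<lambda>k. \<alpha> ^ k) ` {..<n})"
    by (intro card_mono) auto
  moreover have "card (UNIV - {0 :: 'b}) = n"
    by (simp add: card_field n_eq card_Diff_singleton)
  ultimately show "card ((\<lambda>k. \<alpha> ^ k) ` {..<n}) = card {..<n}"
    using card_image_le[of "{..<n}" "\<lambda>k. \<alpha> ^ k"] by simp
qed simp

lemma alpha_power_eq_iff: "\<alpha> ^ a = \<alpha> ^ b \<longleftrightarrow> [a = b] (mod n)"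
proof -
  have "\<alpha> ^ a = \<alpha> ^ b \<longleftrightarrow> \<alpha> ^ (a mod n) = \<alpha> ^ (b mod n)"
    using alpha_power_mod[of a] alpha_power_mod[of b] by simp
  also have "\<dots> \<longleftrightarrow> a mod n = b mod n"
    using inj_on_alpha_power n_pos by (auto dest: inj_onD)
  finally show ?thesis
    unfolding cong_def .
qed

lemma alpha_power_eq_1_iff: "\<alpha> ^ a = 1 \<longleftrightarrow> n dvd a"
  using alpha_power_eq_iff[of a 0] by (simp add: cong_0_iff)

lemma sum_alpha_powers: "(\<Sum>i<n. (\<alpha> ^ e) ^ i) = (if n dvd e then -1 else 0)"
proof (cases "n dvd e")
  case True
  then have "\<alpha> ^ e = 1"
    by (simp add: alpha_power_eq_1_iff)
  then show ?thesis
    using True of_nat_n by simp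
next
  case False
  have "(\<alpha> ^ e) ^ n = (\<alpha> ^ n) ^ e"
    by (simp flip: power_mult add: mult.commute)
  then have "(\<alpha> ^ e) ^ n = 1"
    by (simp add: alpha_power_n)
  then show ?thesis
    using False by (simp add: sum_gp_strict alpha_power_eq_1_iff)
qed

section \<open>The Hermitian dual of a cyclic code\<close>

definition code_of_zeros :: "nat set \<Rightarrow> (nat \<Rightarrow> 'b) set" where
  "code_of_zeros Z = {c \<in> words (q ^ 2) n. \<forall>z\<in>Z. poly (word_poly n c) (\<alpha> ^ z) = 0}"

lemma BCH_eq_code_of_zeros: "BCH \<alpha> n (q ^ 2) \<delta> = code_of_zeros (bch_defining_set (q ^ 2) n \<delta>)"
proof -
  have Z: "bch_defining_set (q ^ 2) n \<delta> \<subseteq> {..<n}"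
    using bch_defining_set_subset n_pos .
  then have "inj_on (\<lambda>z. \<alpha> ^ z) (bch_defining_set (q ^ 2) n \<delta>)"
    using inj_on_alpha_power inj_on_subset by blast
  then show ?thesis
    using Z finite_subset[OF Z]
    by (auto simp: BCH_def cyclic_code_def bch_gen_poly_def code_of_zeros_def
        prod_linear_factors_dvd_iff)
qed

definition trace :: "'b \<Rightarrow> 'b" where
  "trace x = (\<Sum>k<m. x ^ (q ^ (2 * k)))"

lemma trace_power_q2: "trace x ^ (q ^ 2) = trace x"
proof -
  obtain m' where m: "m = Suc m'"
    using m_pos by (cases m) auto
  have "trace x ^ (q ^ 2) = (\<Sum>k<m. x ^ (q ^ (2 * Suc k)))"
    unfolding trace_def frobenius_sum by (simp add: power2_eq_square mult_ac flip: power_mult)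
  also have "\<dots> = (\<Sum>k<m'. x ^ (q ^ (2 * Suc k))) + x ^ (q ^ (2 * m))"
    by (simp only: m sum.lessThan_Suc)
  also have "\<dots> = x ^ (q ^ (2 * 0)) + (\<Sum>k<m'. x ^ (q ^ (2 * Suc k)))"
    by (simp add: frobenius_power_2m)
  also have "\<dots> = (\<Sum>k<m. x ^ (q ^ (2 * k)))"
    by (simp only: m sum.lessThan_Suc_shift)
  finally show ?thesis
    unfolding trace_def .
qed

lemma sum_frobenius_powers_nonzero:
  assumes "K \<subseteq> {..<m}" "0 \<in> K"
  shows "\<exists>\<beta> :: 'b. (\<Sum>k\<in>K. \<beta> ^ (q ^ (2 * k))) \<noteq> 0"
proof (rule ccontr)
  assume all_zero: "\<nexists>\<beta> :: 'b. (\<Sum>k\<in>K. \<beta> ^ (q ^ (2 * k))) \<noteq> 0"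
  define P :: "'b poly" where "P = (\<Sum>k\<in>K. Polynomial.monom 1 (q ^ (2 * k)))"
  have "finite K"
    using assms(1) finite_subset by blast
  have "q ^ (2 * k) = 1 \<longleftrightarrow> k = 0" for k
    using q_ge_2 by simp
  then have "Polynomial.coeff P 1 = 1"
    using \<open>finite K\<close> assms(2) by (simp add: P_def coeff_sum coeff_monom eq_commute[of 1])
  then have "P \<noteq> 0"
    by auto
  have "degree P \<le> q ^ (2 * (m - 1))"
    unfolding P_def
  proof (rule degree_sum_le[OF \<open>finite K\<close>])
    fix k
    assume "k \<in> K"
    then have "q ^ (2 * k) \<le> q ^ (2 * (m - 1))"
      using assms(1) q_ge_2 by (intro power_increasing) auto
    then show "degree (Polynomial.monom (1 :: 'b) (q ^ (2 * k))) \<le> q ^ (2 * (m - 1))"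
      using degree_monom_le le_trans by blast
  qed
  also have "\<dots> < q ^ (2 * m)"
    using q_ge_2 m_pos by (intro power_strict_increasing) auto
  also have "q ^ (2 * m) = card {\<beta>. poly P \<beta> = 0}"
    using all_zero by (simp add: P_def poly_sum Polynomial.poly_monom card_field)
  also have "\<dots> \<le> degree P"
    using \<open>P \<noteq> 0\<close> by (rule card_poly_roots_bound)
  finally show False
    by simp
qed

lemma trace_nondegenerate:
  assumes "\<And>\<beta>. trace (\<beta> * w) = 0"
  shows "w = 0"
proof (rule ccontr)
  assume "w \<noteq> 0"
  obtain \<beta> where "trace \<beta> \<noteq> 0"
    using sum_frobenius_powers_nonzero[of "{..<m}"] m_pos unfolding trace_def by auto
  moreover have "trace (\<beta> / w * w) = 0"
    by (rule assms)
  ultimately show False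
    using \<open>w \<noteq> 0\<close> by simp
qed

definition trace_word :: "'b \<Rightarrow> nat \<Rightarrow> nat \<Rightarrow> 'b" where
  "trace_word \<beta> t i = (if i < n then trace (\<beta> * (\<alpha> ^ t) ^ i) else 0)"

lemma trace_word_in_words: "trace_word \<beta> t \<in> words (q ^ 2) n"
  using q_ge_2 by (auto simp: words_def subfield_of_order_def trace_word_def trace_power_q2)

lemma poly_trace_word:
  "poly (word_poly n (trace_word \<beta> t)) (\<alpha> ^ z) =
     - (\<Sum>k | k < m \<and> n dvd t * q ^ (2 * k) + z. \<beta> ^ (q ^ (2 * k)))"
proof -
  have "poly (word_poly n (trace_word \<beta> t)) (\<alpha> ^ z) =
      (\<Sum>k<m. \<beta> ^ (q ^ (2 * k)) * (\<Sum>i<n. (\<alpha> ^ (t * q ^ (2 * k) + z)) ^ i))"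
    by (simp add: poly_word_poly trace_word_def trace_def sum_distrib_left sum_distrib_right
        sum.swap[of _ "{..<n}"] power_mult_distrib power_add mult_ac flip: power_mult)
  also have "\<dots> = (\<Sum>k<m. - (if n dvd t * q ^ (2 * k) + z then \<beta> ^ (q ^ (2 * k)) else 0))"
    by (intro sum.cong) (simp_all add: sum_alpha_powers)
  also have "\<dots> = - (\<Sum>k | k < m \<and> n dvd t * q ^ (2 * k) + z. \<beta> ^ (q ^ (2 * k)))"
    by (simp add: sum_negf sum.inter_filter[symmetric])
  finally show ?thesis .
qed

lemma words_power_q_in_subfield:
  assumes "y \<in> words (q ^ 2) n"
  shows "(y i ^ q) ^ (q ^ 2) = (y i :: 'b) ^ q"
proof -
  have "(y i ^ q) ^ (q ^ 2) = (y i ^ (q ^ 2)) ^ q"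
    by (simp add: mult.commute flip: power_mult)
  then show ?thesis
    using assms by (simp add: words_def subfield_of_order_def)
qed

lemma poly_word_poly_power_q:
  "poly (word_poly n c) x ^ q = poly (word_poly n (\<lambda>i. (c i :: 'b) ^ q)) (x ^ q)"
  by (simp add: poly_word_poly frobenius_sum_q power_mult_distrib mult.commute flip: power_mult)

lemma herm_product_trace_word:
  "(\<Sum>i<n. trace_word \<beta> t i ^ q * c i) =
     (\<Sum>k<m. \<beta> ^ (q ^ (2 * k + 1)) * poly (word_poly n c) (\<alpha> ^ (t * q ^ (2 * k + 1))))"
proof -
  have "trace_word \<beta> t i ^ q = (\<Sum>k<m. \<beta> ^ (q ^ (2 * k + 1)) * (\<alpha> ^ (t * q ^ (2 * k + 1))) ^ i)"
    if "i < n" for i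
    using that
    by (simp add: trace_word_def trace_def frobenius_sum_q power_mult_distrib mult_ac flip: power_mult)
  then show ?thesis
    by (simp add: poly_word_poly sum_distrib_left sum_distrib_right sum.swap[of _ "{..<n}"] mult_ac)
qed

lemma sum_mult_trace_word:
  assumes "\<And>i. y i ^ (q ^ 2) = y i"
  shows "(\<Sum>i<n. y i * trace_word \<beta> t i) = trace (\<beta> * poly (word_poly n y) (\<alpha> ^ t))"
proof -
  have "trace (\<beta> * poly (word_poly n y) (\<alpha> ^ t)) =
      (\<Sum>k<m. \<Sum>i<n. y i ^ (q ^ (2 * k)) * (\<beta> * (\<alpha> ^ t) ^ i) ^ (q ^ (2 * k)))"
    by (simp add: trace_def poly_word_poly sum_distrib_left frobenius_sum power_mult_distrib mult_ac)
  also have "\<dots> = (\<Sum>i<n. y i * trace_word \<beta> t i)"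
    using assms
    by (simp add: subfield_frobenius_power trace_word_def trace_def sum_distrib_left sum.swap[of _ "{..<m}"])
  finally show ?thesis ..
qed

definition cyclotomic_closed :: "nat set \<Rightarrow> bool" where
  "cyclotomic_closed Z \<longleftrightarrow> Z \<subseteq> {..<n} \<and> (\<forall>z\<in>Z. z * q ^ 2 mod n \<in> Z)"

lemma cyclotomic_closed_bch_defining_set: "cyclotomic_closed (bch_defining_set (q ^ 2) n \<delta>)"
  using bch_defining_set_subset[OF n_pos] bch_defining_set_mult_closed
  by (auto simp: cyclotomic_closed_def)

lemma cyclotomic_closed_mult_power:
  assumes "cyclotomic_closed Z" "s \<in> Z"
  shows "s * q ^ (2 * k) mod n \<in> Z"
proof (induction k)
  case (Suc k)
  have "q ^ (2 * Suc k) = q ^ (2 * k) * q ^ 2"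
    by (simp add: mult_Suc_right power_add power2_eq_square mult.commute)
  then have "s * q ^ (2 * Suc k) mod n = (s * q ^ (2 * k) mod n) * q ^ 2 mod n"
    by (simp only: mod_mult_left_eq mult.assoc)
  then show ?case
    using assms(1) Suc by (simp add: cyclotomic_closed_def)
qed (use assms in \<open>auto simp: cyclotomic_closed_def\<close>)

lemma trace_word_in_code_of_zeros:
  assumes "\<And>k z. k < m \<Longrightarrow> z \<in> Z \<Longrightarrow> \<not> n dvd t * q ^ (2 * k) + z"
  shows "trace_word \<beta> t \<in> code_of_zeros Z"
proof -
  have "poly (word_poly n (trace_word \<beta> t)) (\<alpha> ^ z) = 0" if "z \<in> Z" for z
  proof -
    have no_k: "{k. k < m \<and> n dvd t * q ^ (2 * k) + z} = {}"
      using assms[OF _ that] by blast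
    show ?thesis
      unfolding poly_trace_word no_k by simp
  qed
  then show ?thesis
    by (simp add: code_of_zeros_def trace_word_in_words)
qed

lemma trace_word_in_herm_dual:
  assumes "cyclotomic_closed Z" "s \<in> Z" "[t = q * s] (mod n)"
  shows "trace_word \<beta> t \<in> herm_dual q n (code_of_zeros Z)"
proof -
  have "(\<Sum>i<n. trace_word \<beta> t i ^ q * c i) = 0" if "c \<in> code_of_zeros Z" for c
  proof -
    have "poly (word_poly n c) (\<alpha> ^ (t * q ^ (2 * k + 1))) = 0" for k
    proof -
      have "[t * q ^ (2 * k + 1) = q * s * q ^ (2 * k + 1)] (mod n)"
        using assms(3) by (rule cong_scalar_right)
      also have "q * s * q ^ (2 * k + 1) = s * q ^ (2 * Suc k)"
        by (simp add: mult_Suc_right power_add mult_ac)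
      finally have "\<alpha> ^ (t * q ^ (2 * k + 1)) = \<alpha> ^ (s * q ^ (2 * Suc k) mod n)"
        by (simp add: alpha_power_eq_iff)
      moreover have "s * q ^ (2 * Suc k) mod n \<in> Z"
        by (rule cyclotomic_closed_mult_power[OF assms(1,2)])
      moreover have "\<And>z. z \<in> Z \<Longrightarrow> poly (word_poly n c) (\<alpha> ^ z) = 0"
        using that by (simp add: code_of_zeros_def)
      ultimately show ?thesis
        by simp
    qed
    then show ?thesis
      by (simp add: herm_product_trace_word)
  qed
  then show ?thesis
    by (simp add: herm_dual_def trace_word_in_words)
qed

lemma herm_dual_subset_code_of_zeros:
  assumes closed: "cyclotomic_closed Z"
    and no_pair: "\<And>s z. s \<in> Z \<Longrightarrow> z \<in> Z \<Longrightarrow> \<not> n dvd q * s + z"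
  shows "herm_dual q n (code_of_zeros Z) \<subseteq> code_of_zeros Z"
proof
  fix y
  assume "y \<in> herm_dual q n (code_of_zeros Z)"
  then have y: "y \<in> words (q ^ 2) n"
    and orth: "\<And>c. c \<in> code_of_zeros Z \<Longrightarrow> (\<Sum>i<n. y i ^ q * c i) = 0"
    by (auto simp: herm_dual_def)
  have "poly (word_poly n y) (\<alpha> ^ s) = 0" if "s \<in> Z" for s
  proof -
    have in_code: "trace_word \<beta> (s * q) \<in> code_of_zeros Z" for \<beta>
    proof (rule trace_word_in_code_of_zeros)
      fix k z
      assume "z \<in> Z"
      have "[q * (s * q ^ (2 * k) mod n) + z = q * (s * q ^ (2 * k)) + z] (mod n)"
        by (intro cong_add cong_scalar_left) simp_all
      then show "\<not> n dvd s * q * q ^ (2 * k) + z"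
        using cong_dvd_iff no_pair[OF cyclotomic_closed_mult_power[OF closed that] \<open>z \<in> Z\<close>]
        by (metis mult.assoc mult.commute)
    qed
    have "trace (\<beta> * poly (word_poly n (\<lambda>i. y i ^ q)) (\<alpha> ^ (s * q))) = 0" for \<beta>
      using sum_mult_trace_word[of "\<lambda>i. y i ^ q" \<beta> "s * q", OF words_power_q_in_subfield[OF y]]
        orth[OF in_code[of \<beta>]] by simp
    then have "poly (word_poly n (\<lambda>i. y i ^ q)) (\<alpha> ^ (s * q)) = 0"
      by (rule trace_nondegenerate)
    then have "poly (word_poly n y) (\<alpha> ^ s) ^ q = 0"
      by (simp add: poly_word_poly_power_q power_mult)
    then show ?thesis
      by simp
  qed
  then show "y \<in> code_of_zeros Z"
    using y by (simp add: code_of_zeros_def)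
qed

lemma herm_dual_not_subset_code_of_zeros:
  assumes "cyclotomic_closed Z" "s \<in> Z" "z \<in> Z" "n dvd q * s + z"
  shows "\<not> herm_dual q n (code_of_zeros Z) \<subseteq> code_of_zeros Z"
proof
  assume sub: "herm_dual q n (code_of_zeros Z) \<subseteq> code_of_zeros Z"
  have "z < n"
    using assms(1,3) by (auto simp: cyclotomic_closed_def)
  define t where "t = n - z"
  have "[t + z = q * s + z] (mod n)"
    using \<open>z < n\<close> assms(4) by (simp add: t_def cong_def)
  then have "[t = q * s] (mod n)"
    by (simp add: cong_add_rcancel_nat)
  define K where "K = {k. k < m \<and> n dvd t * q ^ (2 * k) + z}"
  have "0 \<in> K"
    using m_pos \<open>z < n\<close> by (simp add: K_def t_def)
  moreover have "K \<subseteq> {..<m}"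
    by (auto simp: K_def)
  ultimately obtain \<beta> :: 'b where \<beta>: "(\<Sum>k\<in>K. \<beta> ^ (q ^ (2 * k))) \<noteq> 0"
    using sum_frobenius_powers_nonzero by blast
  have "trace_word \<beta> t \<in> code_of_zeros Z"
    using sub trace_word_in_herm_dual[OF assms(1,2) \<open>[t = q * s] (mod n)\<close>] by blast
  then have "poly (word_poly n (trace_word \<beta> t)) (\<alpha> ^ z) = 0"
    using assms(3) by (simp add: code_of_zeros_def)
  then show False
    using \<beta> by (simp add: poly_trace_word K_def)
qed

lemma herm_dual_subset_code_of_zeros_iff:
  assumes "cyclotomic_closed Z"
  shows "herm_dual q n (code_of_zeros Z) \<subseteq> code_of_zeros Z \<longleftrightarrow> \<not> (\<exists>s\<in>Z. \<exists>z\<in>Z. n dvd q * s + z)"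
  using herm_dual_subset_code_of_zeros herm_dual_not_subset_code_of_zeros assms by blast

end

section \<open>Odd-exponent pairs and the designed distance\<close>

definition delta_max :: "nat \<Rightarrow> nat \<Rightarrow> int" where
  "delta_max q m = int q ^ (m + of_bool (even m)) - 1 - (int q ^ 2 - 2) * of_bool (even m)"

lemma delta_max_odd: "odd m \<Longrightarrow> delta_max q m = int q ^ m - 1"
  by (simp add: delta_max_def)

lemma delta_max_even: "even m \<Longrightarrow> delta_max q m = int q ^ (m + 1) - int q ^ 2 + 1"
  by (simp add: delta_max_def)

lemma power_2m_cong_1:
  fixes q :: nat
  assumes "q > 0"
  shows "[q ^ (2 * m * k) = 1] (mod q ^ (2 * m) - 1)"
proof -
  have "[q ^ (2 * m) = 1] (mod q ^ (2 * m) - 1)"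
    using assms by (subst cong_le_nat) (auto intro: exI[of _ 1])
  then show ?thesis
    using cong_pow[of "q ^ (2 * m)" 1 _ k] by (simp add: power_mult)
qed

lemma odd_exponent_le_half:
  fixes q :: nat
  assumes "q > 0" "m \<ge> 1" "odd j" and dvd: "(q ^ (2 * m) - 1) dvd x + q ^ j * y"
  obtains j' where "odd j'" "j' \<le> m"
    "(q ^ (2 * m) - 1) dvd x + q ^ j' * y \<or> (q ^ (2 * m) - 1) dvd y + q ^ j' * x"
proof -
  define r where "r = j mod (2 * m)"
  define d where "d = j div (2 * m)"
  have j_eq: "j = 2 * m * d + r"
    by (simp add: r_def d_def)
  have "odd r"
    using \<open>odd j\<close> unfolding j_eq by simp
  have "r < 2 * m"
    using assms(2) by (simp add: r_def)
  have "[x + q ^ j * y = x + (1 * q ^ r) * y] (mod q ^ (2 * m) - 1)"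
    unfolding j_eq power_add by (intro cong_add cong_mult power_2m_cong_1 cong_refl assms(1))
  then have r_dvd: "(q ^ (2 * m) - 1) dvd x + q ^ r * y"
    using dvd by (simp add: cong_dvd_iff)
  show thesis
  proof (cases "r \<le> m")
    case True
    then show thesis using that \<open>odd r\<close> r_dvd by blast
  next
    case False
    have "q ^ (2 * m - r) * q ^ r = q ^ (2 * m * 1)"
      using \<open>r < 2 * m\<close> by (simp flip: power_add)
    then have "q ^ (2 * m - r) * (x + q ^ r * y) = q ^ (2 * m - r) * x + q ^ (2 * m * 1) * y"
      unfolding distrib_left mult.assoc[symmetric] by simp
    also have "[\<dots> = q ^ (2 * m - r) * x + 1 * y] (mod q ^ (2 * m) - 1)"
      by (intro cong_add cong_mult power_2m_cong_1 cong_refl assms(1))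
    finally have "(q ^ (2 * m) - 1) dvd y + q ^ (2 * m - r) * x"
      using r_dvd cong_dvd_iff dvd_mult by (metis add.commute mult_1)
    moreover have "odd (2 * m - r)" "2 * m - r \<le> m"
      using \<open>odd r\<close> \<open>r < 2 * m\<close> False by auto
    ultimately show thesis using that by blast
  qed
qed

lemma dvd_shift_even_exponent:
  fixes q :: nat
  assumes "q > 0" "m \<ge> 1" "odd i" and dvd: "(q ^ (2 * m) - 1) dvd q ^ i * x + q ^ (2 * b) * y"
  obtains j where "odd j" "(q ^ (2 * m) - 1) dvd y + q ^ j * x"
proof -
  define C where "C = (2 * m - 1) * (2 * b)"
  have "(q ^ i * x + q ^ (2 * b) * y) * q ^ C = q ^ (i + C) * x + q ^ (2 * b + C) * y"
    by (simp add: algebra_simps power_add)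
  also have "2 * b + C = 2 * m * (2 * b)"
    using \<open>m \<ge> 1\<close> by (cases m) (simp_all add: C_def algebra_simps)
  also have "[q ^ (i + C) * x + q ^ (2 * m * (2 * b)) * y = q ^ (i + C) * x + 1 * y] (mod q ^ (2 * m) - 1)"
    by (intro cong_add cong_mult power_2m_cong_1 cong_refl \<open>q > 0\<close>)
  finally have "[(q ^ i * x + q ^ (2 * b) * y) * q ^ C = q ^ (i + C) * x + 1 * y] (mod q ^ (2 * m) - 1)" .
  moreover have "(q ^ (2 * m) - 1) dvd (q ^ i * x + q ^ (2 * b) * y) * q ^ C"
    using dvd by simp
  ultimately have "(q ^ (2 * m) - 1) dvd y + q ^ (i + C) * x"
    using cong_dvd_iff by (metis add.commute mult_1)
  moreover have "odd (i + C)"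
    using \<open>odd i\<close> by (simp add: C_def)
  ultimately show thesis
    using that by blast
qed

lemma sum_lt_modulus_below_delta_max_odd:
  fixes q :: nat
  assumes "q \<ge> 2" "odd m" "j \<le> m"
    and x: "int x < delta_max q m" and y: "int y < delta_max q m"
  shows "int x + int q ^ j * int y < int q ^ (2 * m) - 1"
proof -
  define a where "a = int q ^ m"
  have D: "delta_max q m = a - 1" and N: "int q ^ (2 * m) = a * a"
    using \<open>odd m\<close> by (simp_all add: delta_max_odd a_def mult_2 power_add)
  have "int q ^ j \<le> a"
    using \<open>q \<ge> 2\<close> \<open>j \<le> m\<close> by (simp add: a_def power_increasing)
  moreover have "int y \<le> a - 2" "0 \<le> a - 2"
    using y D by auto
  ultimately have "int q ^ j * int y \<le> a * (a - 2)"
    by (intro mult_mono) (auto simp: a_def)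
  then show ?thesis
    using x D N \<open>0 \<le> a - 2\<close> by (simp add: algebra_simps)
qed

lemma sum_lt_modulus_below_delta_max_even:
  fixes q :: nat
  assumes "q \<ge> 2" "m \<ge> 1" "even m" "odd j" "j \<le> m"
    and x: "int x < delta_max q m" and y: "int y < delta_max q m"
  shows "int x + int q ^ j * int y < int q ^ (2 * m) - 1"
proof -
  define b c where "b = int q ^ (m - 1)" and "c = int q ^ 2"
  have D: "delta_max q m = b * c - c + 1"
    using \<open>m \<ge> 1\<close> \<open>even m\<close> by (simp add: delta_max_even b_def c_def flip: power_add)
  have "2 * m = (m - 1) + (m - 1) + 2"
    using \<open>m \<ge> 1\<close> by simp
  then have N: "int q ^ (2 * m) = b * b * c"
    by (simp only: b_def c_def power_add)
  have "j \<le> m - 1"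
    using \<open>even m\<close> \<open>odd j\<close> \<open>j \<le> m\<close> by (cases "j = m") auto
  then have "int q ^ j \<le> b"
    using \<open>q \<ge> 2\<close> by (simp add: b_def power_increasing)
  moreover have "int y \<le> b * c - c" "0 \<le> b * c - c"
    using y D by auto
  ultimately have "int q ^ j * int y \<le> b * (b * c - c)"
    by (intro mult_mono) (auto simp: b_def)
  moreover have "c \<ge> 4"
    using \<open>q \<ge> 2\<close> power_mono[of 2 "int q" 2] by (simp add: c_def)
  ultimately show ?thesis
    using x D N by (simp add: algebra_simps)
qed

lemma sum_lt_modulus_below_delta_max:
  fixes q :: nat
  assumes "q \<ge> 2" "m \<ge> 1" "odd j" "j \<le> m"
    and "int x < delta_max q m" "int y < delta_max q m"
  shows "x + q ^ j * y < q ^ (2 * m) - 1"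
proof -
  have "int x + int q ^ j * int y < int q ^ (2 * m) - 1"
    using sum_lt_modulus_below_delta_max_odd[of q m j x y]
      sum_lt_modulus_below_delta_max_even[of q m j x y] assms
    by (cases "even m") auto
  moreover have "q ^ (2 * m) \<ge> 1"
    using \<open>q \<ge> 2\<close> by simp
  ultimately have "int (x + q ^ j * y) < int (q ^ (2 * m) - 1)"
    by (simp add: of_nat_diff)
  then show ?thesis
    by linarith
qed

lemma conjugate_pair_ge_delta_max:
  fixes q :: nat
  assumes "q \<ge> 2" "m \<ge> 1" "odd j" "x \<ge> 1" "y \<ge> 1"
    and "(q ^ (2 * m) - 1) dvd x + q ^ j * y"
  shows "delta_max q m \<le> int x \<or> delta_max q m \<le> int y"
proof (rule ccontr)
  assume "\<not> ?thesis"
  then have below: "int x < delta_max q m" "int y < delta_max q m"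
    by auto
  have "q > 0"
    using \<open>q \<ge> 2\<close> by simp
  then obtain j' where "odd j'" "j' \<le> m"
    and "(q ^ (2 * m) - 1) dvd x + q ^ j' * y \<or> (q ^ (2 * m) - 1) dvd y + q ^ j' * x"
    using odd_exponent_le_half assms(2,3,6) by blast
  moreover have "x + q ^ j' * y < q ^ (2 * m) - 1" "y + q ^ j' * x < q ^ (2 * m) - 1"
    using sum_lt_modulus_below_delta_max[OF assms(1,2) \<open>odd j'\<close> \<open>j' \<le> m\<close>] below by blast+
  ultimately show False
    using \<open>x \<ge> 1\<close> \<open>y \<ge> 1\<close> by (auto dest: nat_dvd_not_less[rotated])
qed

lemma conjugate_pair_at_delta_max_odd:
  fixes q :: nat
  assumes "q \<ge> 2" "odd m"
  obtains x y where "1 \<le> x" "int x \<le> delta_max q m" "1 \<le> y" "int y \<le> delta_max q m"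
    "x + q ^ m * y = q ^ (2 * m) - 1"
proof -
  define a where "a = q ^ m"
  have "m \<ge> 1"
    using \<open>odd m\<close> by (cases m) auto
  then have "a \<ge> 2"
    using \<open>q \<ge> 2\<close> self_le_power[of q m] by (simp add: a_def)
  have "q ^ (2 * m) = a * a"
    by (simp add: a_def mult_2 power_add)
  then show thesis
    using \<open>odd m\<close> \<open>a \<ge> 2\<close>
    by (intro that[of "a - 1" "a - 1"]) (auto simp: delta_max_odd a_def[symmetric] of_nat_diff algebra_simps)
qed

lemma conjugate_pair_at_delta_max_even:
  fixes q :: nat
  assumes "q \<ge> 2" "even m" "m \<ge> 4"
  obtains x y where "1 \<le> x" "int x \<le> delta_max q m" "1 \<le> y" "int y \<le> delta_max q m"
    "x + q ^ (m - 1) * y = q ^ (2 * m) - 1"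
proof -
  define b c where "b = q ^ (m - 1)" and "c = q ^ 2"
  have "c \<ge> 4"
    using \<open>q \<ge> 2\<close> power_mono[of 2 q 2] by (simp add: c_def)
  have "c \<le> b"
    using \<open>q \<ge> 2\<close> \<open>m \<ge> 4\<close> by (simp add: b_def c_def power_increasing)
  have D: "delta_max q m = int b * int c - int c + 1"
    using \<open>m \<ge> 4\<close> \<open>even m\<close> by (simp add: delta_max_even b_def c_def flip: power_add)
  have "2 * m = (m - 1) + (m - 1) + 2"
    using \<open>m \<ge> 4\<close> by simp
  then have N: "q ^ (2 * m) = b * b * c"
    by (simp only: b_def c_def power_add)
  have "b \<ge> 4" "b * c \<ge> 4 * b"
    using \<open>c \<ge> 4\<close> \<open>c \<le> b\<close> by simp_all
  define x y where "x = b * c - b - 1" and "y = b * c - c + 1"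
  have "1 \<le> x"
    unfolding x_def using \<open>b * c \<ge> 4 * b\<close> \<open>b \<ge> 4\<close> by linarith
  have x: "int x = int b * int c - int b - 1"
    using \<open>1 \<le> x\<close> by (simp add: x_def of_nat_diff)
  have y: "int y = int b * int c - int c + 1"
    using \<open>c \<le> b\<close> by (simp add: y_def of_nat_diff mult_le_mono)
  have "int (x + b * y) = int (b * b * c) - 1"
    by (simp add: x y algebra_simps)
  then have "x + q ^ (m - 1) * y = q ^ (2 * m) - 1"
    unfolding N b_def[symmetric] by linarith
  then show thesis
    using \<open>1 \<le> x\<close> \<open>c \<le> b\<close> x y D by (intro that[of x y]) auto
qed

lemma conjugate_pair_at_delta_max:
  fixes q :: nat
  assumes "q \<ge> 2" "m \<ge> 1" "m \<noteq> 2"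
  obtains x y j where "odd j" "1 \<le> x" "int x \<le> delta_max q m" "1 \<le> y" "int y \<le> delta_max q m"
    "x + q ^ j * y = q ^ (2 * m) - 1"
proof (cases "even m")
  case True
  then have "m \<ge> 4" "odd (m - 1)"
    using assms(2,3) by presburger+
  then show thesis
    using conjugate_pair_at_delta_max_even[OF \<open>q \<ge> 2\<close> True] that by blast
next
  case False
  then show thesis
    using conjugate_pair_at_delta_max_odd[OF \<open>q \<ge> 2\<close> False] that by blast
qed

lemma conjugate_pair_below_iff:
  fixes q :: nat
  assumes "q \<ge> 2" "m \<ge> 1" "m \<noteq> 2"
  shows "(\<exists>x y j. odd j \<and> x \<in> {1..<\<delta>} \<and> y \<in> {1..<\<delta>} \<and> (q ^ (2 * m) - 1) dvd x + q ^ j * y)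
    \<longleftrightarrow> delta_max q m < int \<delta>"
proof
  assume "\<exists>x y j. odd j \<and> x \<in> {1..<\<delta>} \<and> y \<in> {1..<\<delta>} \<and> (q ^ (2 * m) - 1) dvd x + q ^ j * y"
  then obtain x y j where "odd j" "x \<in> {1..<\<delta>}" "y \<in> {1..<\<delta>}" "(q ^ (2 * m) - 1) dvd x + q ^ j * y"
    by blast
  then show "delta_max q m < int \<delta>"
    using conjugate_pair_ge_delta_max[OF assms(1,2)] by fastforce
next
  assume "delta_max q m < int \<delta>"
  moreover obtain x y j where "odd j" "1 \<le> x" "int x \<le> delta_max q m" "1 \<le> y" "int y \<le> delta_max q m"
    "x + q ^ j * y = q ^ (2 * m) - 1"
    using conjugate_pair_at_delta_max[OF assms] .
  ultimately show "\<exists>x y j. odd j \<and> x \<in> {1..<\<delta>} \<and> y \<in> {1..<\<delta>} \<and> (q ^ (2 * m) - 1) dvd x + q ^ j * y"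
    by (intro exI[of _ x] exI[of _ y] exI[of _ j]) auto
qed

lemma bch_defining_set_conjugate_pair_iff:
  fixes q :: nat
  assumes "q > 0" "m \<ge> 1" "n = q ^ (2 * m) - 1" "\<delta> \<le> n"
  shows "(\<exists>s\<in>bch_defining_set (q ^ 2) n \<delta>. \<exists>z\<in>bch_defining_set (q ^ 2) n \<delta>. n dvd q * s + z)
    \<longleftrightarrow> (\<exists>x y j. odd j \<and> x \<in> {1..<\<delta>} \<and> y \<in> {1..<\<delta>} \<and> n dvd x + q ^ j * y)"
proof
  assume "\<exists>s\<in>bch_defining_set (q ^ 2) n \<delta>. \<exists>z\<in>bch_defining_set (q ^ 2) n \<delta>. n dvd q * s + z"
  then obtain x a y b where x: "x \<in> {1..<\<delta>}" and y: "y \<in> {1..<\<delta>}"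
    and dvd: "n dvd q * (x * (q ^ 2) ^ a mod n) + y * (q ^ 2) ^ b mod n"
    by (auto simp: bch_defining_set_def cyc_coset_def)
  have "[q * (x * (q ^ 2) ^ a mod n) + y * (q ^ 2) ^ b mod n = q * (x * (q ^ 2) ^ a) + y * (q ^ 2) ^ b] (mod n)"
    by (intro cong_add cong_scalar_left) simp_all
  also have "q * (x * (q ^ 2) ^ a) + y * (q ^ 2) ^ b = q ^ (2 * a + 1) * x + q ^ (2 * b) * y"
    by (simp add: algebra_simps flip: power_mult)
  finally have "(q ^ (2 * m) - 1) dvd q ^ (2 * a + 1) * x + q ^ (2 * b) * y"
    using dvd cong_dvd_iff \<open>n = _\<close> by blast
  moreover have "odd (2 * a + 1)"
    by simp
  ultimately obtain j where "odd j" "(q ^ (2 * m) - 1) dvd y + q ^ j * x"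
    using dvd_shift_even_exponent[OF \<open>q > 0\<close> \<open>m \<ge> 1\<close>] by blast
  then show "\<exists>x y j. odd j \<and> x \<in> {1..<\<delta>} \<and> y \<in> {1..<\<delta>} \<and> n dvd x + q ^ j * y"
    using x y \<open>n = _\<close> by blast
next
  assume "\<exists>x y j. odd j \<and> x \<in> {1..<\<delta>} \<and> y \<in> {1..<\<delta>} \<and> n dvd x + q ^ j * y"
  then obtain x y e where x: "x \<in> {1..<\<delta>}" and y: "y \<in> {1..<\<delta>}" and dvd: "n dvd x + q ^ (2 * e + 1) * y"
    by (auto elim!: oddE)
  define s where "s = y * (q ^ 2) ^ e mod n"
  have "s \<in> bch_defining_set (q ^ 2) n \<delta>"
    using y by (auto simp: s_def bch_defining_set_def cyc_coset_def)
  moreover have "x \<in> bch_defining_set (q ^ 2) n \<delta>"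
    using x \<open>\<delta> \<le> n\<close> unfolding bch_defining_set_def cyc_coset_def
    by (auto intro!: bexI[of _ x] exI[of _ 0])
  moreover have "[q * s + x = q * (y * (q ^ 2) ^ e) + x] (mod n)"
    unfolding s_def by (intro cong_add cong_scalar_left) simp_all
  moreover have "q * (y * (q ^ 2) ^ e) + x = x + q ^ (2 * e + 1) * y"
    by (simp add: algebra_simps flip: power_mult)
  ultimately show "\<exists>s\<in>bch_defining_set (q ^ 2) n \<delta>. \<exists>z\<in>bch_defining_set (q ^ 2) n \<delta>. n dvd q * s + z"
    using dvd cong_dvd_iff by metis
qed

theorem mainTheorem3:
  fixes q m n \<delta> :: nat and \<alpha> :: "'b::{field,finite}"
  assumes "prime_power q"
    and "m \<ge> 1" and "m \<noteq> 2"
    and "card (UNIV :: 'b set) = q ^ (2 * m)"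
    and "primitive_elem \<alpha>"
    and "n = q ^ (2 * m) - 1"
    and "2 \<le> \<delta>" and "\<delta> \<le> n"
  shows "herm_dual q n (BCH \<alpha> n (q^2) \<delta>) \<subseteq> BCH \<alpha> n (q^2) \<delta> \<longleftrightarrow>
         int \<delta> \<le> int q ^ (m + of_bool (even m)) - 1 - (int q ^ 2 - 2) * of_bool (even m)"
proof -
  interpret hermitian_field q m n \<alpha>
    using assms by unfold_locales
  have "herm_dual q n (BCH \<alpha> n (q^2) \<delta>) \<subseteq> BCH \<alpha> n (q^2) \<delta> \<longleftrightarrow>
      \<not> (\<exists>s\<in>bch_defining_set (q ^ 2) n \<delta>. \<exists>z\<in>bch_defining_set (q ^ 2) n \<delta>. n dvd q * s + z)"
    unfolding BCH_eq_code_of_zeros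
    by (rule herm_dual_subset_code_of_zeros_iff[OF cyclotomic_closed_bch_defining_set])
  also have "\<dots> \<longleftrightarrow> \<not> (\<exists>x y j. odd j \<and> x \<in> {1..<\<delta>} \<and> y \<in> {1..<\<delta>} \<and> n dvd x + q ^ j * y)"
    using bch_defining_set_conjugate_pair_iff[of q m n \<delta>] q_ge_2 assms(2,6,8) by simp
  also have "\<dots> \<longleftrightarrow> \<not> delta_max q m < int \<delta>"
    using conjugate_pair_below_iff[of q m \<delta>] q_ge_2 assms(2,3,6) by simp
  finally show ?thesis
    by (simp add: delta_max_def not_less)
qed

end
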